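(* Let $S$ be a specialisation independent scheduling rule. For every clause $c=(h\leftarrow B)$ there exist p-goals $M_s,M_q$ with $B=M_s|M_q$ (depending only on $c$) such that every priority derivation step $a|K\xrightarrow{c\xi,\eta}R$ belonging to $S$ satisfies $R=(M_s\xi\underline{\pi}|K|M_q\xi\underline{\pi})\eta$ for some shifting $\underline{\pi}$. In other words, $S$ is of stack-queue type; together with the fact that complete stack-queue sets are specialisation independent scheduling rules, specialisation independent scheduling rules are exactly the complete sets of stack-queue type.
   Context: A p-atom is a pair $a[p]$ of an atom $a$ and a rational priority $p$. A p-goal is a finite set of p-atoms with pairwise distinct priorities, regarded as a list ordered by increasing priority. Substitutions act on atoms and leave priorities unchanged. A clause is $h\leftarrow B$ with $h$ an atom and $B$ a p-goal. For p-goals with no common priority, $F+G=F\cup G$; $F|G$ denotes $F+G$ when all priorities of $F$ are smaller than those of $G$. A shifting $\underline{\pi}$ is a strictly increasing bijection $\mathbb{Q}\to\mathbb{Q}$ acting on priorities ($G\underline\pi$). Priority derivation step: for a p-goal $a|F$ ($a$ of least priority), clause $c=(h\leftarrow B)$, renaming $\xi$ with $var(a|F)\cap var(c\xi)=\emptyset$, idempotent relevant mgu $\theta$ of $a$ and $h\xi$, shifting $\underline{\pi}$ with $F$, $B\xi\underline{\pi}$ sharing no priority: $a|F\xrightarrow{c\xi,\theta}(F+B\xi\underline{\pi})\theta$. Lowering: for $c=(h\leftarrow B)$, a step $a\lambda\underline{\sigma}|(K\lambda\underline{\sigma}+X)\xrightarrow{c}(X+K\lambda\underline{\sigma}+B\xi''\underline{\theta}'')\alpha''$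 is a lowering by $X$ of a step $a|K\xrightarrow{c}(K+B\xi'\underline{\theta}')\alpha'$ ($\lambda$ a substitution, $\underline\sigma$ a shifting); it is a congruent lowering by $X$ if some shifting $\underline{\rho}$ has $K\underline{\rho}=K\underline{\sigma}$ and $B\underline{\theta}'\underline{\rho}=B\underline{\theta}''$. Steps are congruent lowerings of each other if each is a congruent lowering of the other. A set $S$ of steps is complete if (i) whenever some step $G\xrightarrow{c}\cdot$ exists, some step $G\xrightarrow{c}\cdot$ lies in $S$, and (ii) $S$ contains every step that is a congruent lowering of each other with a step of $S$; it is specialisation independent if whenever $Ds_1,Ds_2\in S$ and $Ds_2$ is a lowering of $Ds_1$ by $X$, $Ds_2$ is a congruent lowering of $Ds_1$ by $X$. A specialisation independent scheduling rule is a complete specialisation independent set of steps. Stack-queue type: a set $SQ$ of priority derivation steps is of stack-queue type if for every clause $c=(h\leftarrow B)$ there are p-goals $M_s,M_q$ with $B=M_s|M_q$ such that every step $a|K\xrightarrow{c\xi,\mu}R$ in $SQ$ satisfies $R=(M_s\xi\underline{\gamma}|K|M_q\xi\underline{\gamma})\mu$ for some shifting $\underline{\gamma}$. *)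

theory Defs
  imports Complex_Main
begin

datatype ('f,'v) trm = Var 'v | Fn 'f "('f,'v) trm list"

type_synonym ('f,'v) atom = "'f \<times> ('f,'v) trm list"
type_synonym ('f,'v) patom = "('f,'v) atom \<times> rat"
type_synonym ('f,'v) pgoal = "('f,'v) patom set"
type_synonym ('f,'v) subst = "'v \<Rightarrow> ('f,'v) trm"
type_synonym ('f,'v) clause = "('f,'v) atom \<times> ('f,'v) pgoal"

fun tsubst :: "('f,'v) trm \<Rightarrow> ('f,'v) subst \<Rightarrow> ('f,'v) trm" where
  "tsubst (Var x) \<sigma> = \<sigma> x"
| "tsubst (Fn f ts) \<sigma> = Fn f (map (\<lambda>t. tsubst t \<sigma>) ts)"

fun tvars :: "('f,'v) trm \<Rightarrow> 'v set" where
  "tvars (Var x) = {x}"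
| "tvars (Fn f ts) = \<Union> (set (map tvars ts))"

definition asubst :: "('f,'v) atom \<Rightarrow> ('f,'v) subst \<Rightarrow> ('f,'v) atom" where
  "asubst a \<sigma> = (fst a, map (\<lambda>t. tsubst t \<sigma>) (snd a))"

definition avars :: "('f,'v) atom \<Rightarrow> 'v set" where
  "avars a = \<Union> (tvars ` set (snd a))"

definition gsubst :: "('f,'v) pgoal \<Rightarrow> ('f,'v) subst \<Rightarrow> ('f,'v) pgoal" where
  "gsubst G \<sigma> = (\<lambda>(a,p). (asubst a \<sigma>, p)) ` G"

definition gvars :: "('f,'v) pgoal \<Rightarrow> 'v set" where
  "gvars G = \<Union> ((\<lambda>(a,p). avars a) ` G)"

definition subst_comp :: "('f,'v) subst \<Rightarrow> ('f,'v) subst \<Rightarrow> ('f,'v) subst" where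
  "subst_comp \<sigma> \<tau> = (\<lambda>x. tsubst (\<sigma> x) \<tau>)"

definition sdom :: "('f,'v) subst \<Rightarrow> 'v set" where
  "sdom \<theta> = {x. \<theta> x \<noteq> Var x}"

definition svars :: "('f,'v) subst \<Rightarrow> 'v set" where
  "svars \<theta> = sdom \<theta> \<union> \<Union> (tvars ` \<theta> ` sdom \<theta>)"

definition unifier :: "('f,'v) subst \<Rightarrow> ('f,'v) atom \<Rightarrow> ('f,'v) atom \<Rightarrow> bool" where
  "unifier \<theta> a b \<longleftrightarrow> asubst a \<theta> = asubst b \<theta>"

definition mgu :: "('f,'v) subst \<Rightarrow> ('f,'v) atom \<Rightarrow> ('f,'v) atom \<Rightarrow> bool" where
  "mgu \<theta> a b \<longleftrightarrow> unifier \<theta> a b \<and> (\<forall>\<sigma>. unifier \<sigma> a b \<longrightarrow> (\<exists>\<delta>. \<sigma> = subst_comp \<theta> \<delta>))"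

definition idempotent :: "('f,'v) subst \<Rightarrow> bool" where
  "idempotent \<theta> \<longleftrightarrow> subst_comp \<theta> \<theta> = \<theta>"

definition relevant :: "('f,'v) subst \<Rightarrow> ('f,'v) atom \<Rightarrow> ('f,'v) atom \<Rightarrow> bool" where
  "relevant \<theta> a b \<longleftrightarrow> svars \<theta> \<subseteq> avars a \<union> avars b"

definition renaming :: "('v \<Rightarrow> 'v) \<Rightarrow> bool" where
  "renaming \<xi> \<longleftrightarrow> bij \<xi>"

definition ren :: "('v \<Rightarrow> 'v) \<Rightarrow> ('f,'v) subst" where
  "ren \<xi> = (\<lambda>x. Var (\<xi> x))"

definition prios :: "('f,'v) pgoal \<Rightarrow> rat set" where
  "prios G = snd ` G"

definition pgoal :: "('f,'v) pgoal \<Rightarrow> bool" where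
  "pgoal G \<longleftrightarrow> finite G \<and> inj_on snd G"

definition shifting :: "(rat \<Rightarrow> rat) \<Rightarrow> bool" where
  "shifting \<pi> \<longleftrightarrow> strict_mono \<pi> \<and> bij \<pi>"

definition gshift :: "('f,'v) pgoal \<Rightarrow> (rat \<Rightarrow> rat) \<Rightarrow> ('f,'v) pgoal" where
  "gshift G \<pi> = (\<lambda>(a,p). (a, \<pi> p)) ` G"

text \<open>F + G is defined (as the union) when F and G share no priority.\<close>
definition prio_disj :: "('f,'v) pgoal \<Rightarrow> ('f,'v) pgoal \<Rightarrow> bool" where
  "prio_disj F G \<longleftrightarrow> prios F \<inter> prios G = {}"

text \<open>F | G is defined (as the union) when all priorities of F are below those of G.\<close>
definition prio_before :: "('f,'v) pgoal \<Rightarrow> ('f,'v) pgoal \<Rightarrow> bool" where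
  "prio_before F G \<longleftrightarrow> (\<forall>p\<in>prios F. \<forall>q\<in>prios G. p < q)"

text \<open>is_first A F G: G = A | F, i.e. A is the p-atom of least priority of G, F the rest.\<close>
definition is_first :: "('f,'v) patom \<Rightarrow> ('f,'v) pgoal \<Rightarrow> ('f,'v) pgoal \<Rightarrow> bool" where
  "is_first A F G \<longleftrightarrow> G = insert A F \<and> prio_before {A} F"

text \<open>A step  G --(c xi, theta)--> R  is recorded as the tuple (G, c, xi, theta, R).\<close>
type_synonym ('f,'v) step =
  "('f,'v) pgoal \<times> ('f,'v) clause \<times> ('v \<Rightarrow> 'v) \<times> ('f,'v) subst \<times> ('f,'v) pgoal"

definition step_via ::
  "('f,'v) pgoal \<Rightarrow> ('f,'v) clause \<Rightarrow> ('v \<Rightarrow> 'v) \<Rightarrow> ('f,'v) subst \<Rightarrow> (rat \<Rightarrow> rat) \<Rightarrow> ('f,'v) pgoal \<Rightarrow> bool"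
where
  "step_via G c \<xi> \<theta> \<pi> R \<longleftrightarrow>
    (\<exists>A F. pgoal G \<and> is_first A F G \<and> pgoal (snd c) \<and> renaming \<xi> \<and>
      gvars G \<inter> (avars (asubst (fst c) (ren \<xi>)) \<union> gvars (gsubst (snd c) (ren \<xi>))) = {} \<and>
      mgu \<theta> (fst A) (asubst (fst c) (ren \<xi>)) \<and> idempotent \<theta> \<and>
      relevant \<theta> (fst A) (asubst (fst c) (ren \<xi>)) \<and>
      shifting \<pi> \<and> prio_disj F (gshift (gsubst (snd c) (ren \<xi>)) \<pi>) \<and>
      R = gsubst (F \<union> gshift (gsubst (snd c) (ren \<xi>)) \<pi>) \<theta>)"

definition is_step :: "('f,'v) step \<Rightarrow> bool" where
  "is_step D \<longleftrightarrow> (case D of (G, c, \<xi>, \<theta>, R) \<Rightarrow> (\<exists>\<pi>. step_via G c \<xi> \<theta> \<pi> R))"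

text \<open>lowering_wit D1 D2 X lam sig th1 th2 A K: D2 is a lowering by X of D1 = (A|K --c--> ...),
  witnessed by the substitution lam, the shifting sig and the body shiftings th1, th2.\<close>
definition lowering_wit ::
  "('f,'v) step \<Rightarrow> ('f,'v) step \<Rightarrow> ('f,'v) pgoal \<Rightarrow> ('f,'v) subst \<Rightarrow> (rat \<Rightarrow> rat)
    \<Rightarrow> (rat \<Rightarrow> rat) \<Rightarrow> (rat \<Rightarrow> rat) \<Rightarrow> ('f,'v) patom \<Rightarrow> ('f,'v) pgoal \<Rightarrow> bool"
where
  "lowering_wit D1 D2 X lam sig th1 th2 A K \<longleftrightarrow>
    is_step D1 \<and> is_step D2 \<and>
    (case D1 of (G1, c1, \<xi>1, \<alpha>1, R1) \<Rightarrow>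
     case D2 of (G2, c2, \<xi>2, \<alpha>2, R2) \<Rightarrow>
      c2 = c1 \<and>
      is_first A K G1 \<and>
      shifting th1 \<and> prio_disj K (gshift (gsubst (snd c1) (ren \<xi>1)) th1) \<and>
      R1 = gsubst (K \<union> gshift (gsubst (snd c1) (ren \<xi>1)) th1) \<alpha>1 \<and>
      shifting sig \<and>
      prio_disj (gshift (gsubst K lam) sig) X \<and>
      is_first (asubst (fst A) lam, sig (snd A)) (gshift (gsubst K lam) sig \<union> X) G2 \<and>
      shifting th2 \<and>
      prio_disj (X \<union> gshift (gsubst K lam) sig) (gshift (gsubst (snd c1) (ren \<xi>2)) th2) \<and>
      R2 = gsubst (X \<union> gshift (gsubst K lam) sig \<union> gshift (gsubst (snd c1) (ren \<xi>2)) th2) \<alpha>2)"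

definition lowering :: "('f,'v) step \<Rightarrow> ('f,'v) step \<Rightarrow> ('f,'v) pgoal \<Rightarrow> bool" where
  "lowering D1 D2 X \<longleftrightarrow> (\<exists>lam sig th1 th2 A K. lowering_wit D1 D2 X lam sig th1 th2 A K)"

definition congruent_lowering :: "('f,'v) step \<Rightarrow> ('f,'v) step \<Rightarrow> ('f,'v) pgoal \<Rightarrow> bool" where
  "congruent_lowering D1 D2 X \<longleftrightarrow>
    (\<exists>lam sig th1 th2 A K \<rho>. lowering_wit D1 D2 X lam sig th1 th2 A K \<and>
       shifting \<rho> \<and> gshift K \<rho> = gshift K sig \<and>
       gshift (gshift (snd (fst (snd D1))) th1) \<rho> = gshift (snd (fst (snd D1))) th2)"

definition mutual_congruent_lowerings :: "('f,'v) step \<Rightarrow> ('f,'v) step \<Rightarrow> bool" where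
  "mutual_congruent_lowerings D D' \<longleftrightarrow>
    (\<exists>X. congruent_lowering D D' X) \<and> (\<exists>X. congruent_lowering D' D X)"

definition complete :: "('f,'v) step set \<Rightarrow> bool" where
  "complete S \<longleftrightarrow>
    (\<forall>D\<in>S. is_step D) \<and>
    (\<forall>G c. (\<exists>\<xi> \<theta> R. is_step (G, c, \<xi>, \<theta>, R)) \<longrightarrow> (\<exists>\<xi> \<theta> R. (G, c, \<xi>, \<theta>, R) \<in> S)) \<and>
    (\<forall>D D'. D \<in> S \<and> mutual_congruent_lowerings D D' \<longrightarrow> D' \<in> S)"

definition spec_independent :: "('f,'v) step set \<Rightarrow> bool" where
  "spec_independent S \<longleftrightarrow>
    (\<forall>D1 D2 X. D1 \<in> S \<and> D2 \<in> S \<and> lowering D1 D2 X \<longrightarrow> congruent_lowering D1 D2 X)"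

definition spec_indep_scheduling_rule :: "('f,'v) step set \<Rightarrow> bool" where
  "spec_indep_scheduling_rule S \<longleftrightarrow> complete S \<and> spec_independent S"

definition stack_queue_type :: "('f,'v) step set \<Rightarrow> bool" where
  "stack_queue_type S \<longleftrightarrow>
    (\<forall>h B. pgoal B \<longrightarrow>
      (\<exists>Ms Mq. pgoal Ms \<and> pgoal Mq \<and> B = Ms \<union> Mq \<and> prio_before Ms Mq \<and>
        (\<forall>G \<xi> \<mu> R A K. (G, (h, B), \<xi>, \<mu>, R) \<in> S \<and> is_first A K G \<longrightarrow>
          (\<exists>\<gamma>. shifting \<gamma> \<and>
             prio_before (gshift (gsubst Ms (ren \<xi>)) \<gamma>) K \<and>
             prio_before (gshift (gsubst Ms (ren \<xi>)) \<gamma> \<union> K) (gshift (gsubst Mq (ren \<xi>)) \<gamma>) \<and>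
             R = gsubst (gshift (gsubst Ms (ren \<xi>)) \<gamma> \<union> K \<union> gshift (gsubst Mq (ren \<xi>)) \<gamma>) \<mu>))))"

end

theory Submission
  imports Defs "HOL-Library.Nat_Bijection"
begin

text \<open>
  If one step of a specialisation independent rule S is a lowering of
  another, the shifting that makes the lowering congruent is monotone, so a body atom precedes
  a context atom in the first step iff its image precedes the image of that atom in the second.
  Enlarging the context of a step by X gives a lowering by X, and every step with a one-atom
  context is a lowering of a step on a generic goal built from fresh variables; comparing any
  two steps through the generic goal with two context atoms shows that whether a body priority
  is placed before a context priority depends only on the body priority. The body priorities
  placed before the context form a downward closed set, and splitting B there gives M_s | M_q.
\<close>

lemma tsubst_Var [simp]: "tsubst t Var = t"
  by (induction t) (auto simp: map_idI)

lemma tsubst_id_on: "\<forall>x\<in>tvars t. \<sigma> x = Var x \<Longrightarrow> tsubst t \<sigma> = t"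
  by (induction t) (auto simp: map_idI)

lemma finite_tvars: "finite (tvars t)"
  by (induction t) auto

lemma finite_avars: "finite (avars a)"
  by (simp add: avars_def finite_tvars)

lemma finite_gvars: "finite G \<Longrightarrow> finite (gvars G)"
  by (auto simp: gvars_def finite_avars)

lemma asubst_Var [simp]: "asubst a Var = a"
  by (simp add: asubst_def)

lemma fst_asubst [simp]: "fst (asubst a \<sigma>) = fst a"
  and length_snd_asubst [simp]: "length (snd (asubst a \<sigma>)) = length (snd a)"
  by (simp_all add: asubst_def)

lemma unifier_same_shape: "unifier \<sigma> a b \<Longrightarrow> fst a = fst b \<and> length (snd a) = length (snd b)"
  unfolding unifier_def by (metis fst_asubst length_snd_asubst)

lemma ren_id [simp]: "ren id = Var"
  by (simp add: ren_def fun_eq_iff)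

lemma gsubst_Var [simp]: "gsubst G Var = G"
  by (auto simp: gsubst_def)

lemma gshift_id [simp]: "gshift G id = G"
  by (auto simp: gshift_def)

lemma gsubst_Un: "gsubst (F \<union> G) \<sigma> = gsubst F \<sigma> \<union> gsubst G \<sigma>"
  by (auto simp: gsubst_def)

lemma gshift_Un: "gshift (F \<union> G) \<pi> = gshift F \<pi> \<union> gshift G \<pi>"
  by (auto simp: gshift_def)

lemma gsubst_singleton [simp]: "gsubst {(a, p)} \<sigma> = {(asubst a \<sigma>, p)}"
  by (simp add: gsubst_def)

lemma gshift_singleton [simp]: "gshift {(a, p)} \<pi> = {(a, \<pi> p)}"
  by (simp add: gshift_def)

lemma prios_gsubst [simp]: "prios (gsubst G \<sigma>) = prios G"
  by (force simp: prios_def gsubst_def image_iff)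

lemma prios_gshift [simp]: "prios (gshift G \<pi>) = \<pi> ` prios G"
  by (force simp: prios_def gshift_def image_iff)

lemma prios_Un [simp]: "prios (F \<union> G) = prios F \<union> prios G"
  and prios_insert [simp]: "prios (insert A G) = insert (snd A) (prios G)"
  and prios_empty [simp]: "prios {} = {}"
  by (auto simp: prios_def)

lemma prios_mono: "F \<subseteq> G \<Longrightarrow> prios F \<subseteq> prios G"
  by (auto simp: prios_def)

lemma gvars_insert [simp]: "gvars (insert (a, p) G) = avars a \<union> gvars G"
  and gvars_empty [simp]: "gvars {} = {}"
  by (auto simp: gvars_def)

lemma gvars_mono: "F \<subseteq> G \<Longrightarrow> gvars F \<subseteq> gvars G"
  by (auto simp: gvars_def)

lemma pgoal_subset: "pgoal G \<Longrightarrow> F \<subseteq> G \<Longrightarrow> pgoal F"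
  by (auto simp: pgoal_def intro: finite_subset inj_on_subset)

lemma finite_prios: "pgoal G \<Longrightarrow> finite (prios G)"
  by (simp add: pgoal_def prios_def)

lemma shifting_strict_mono: "shifting \<pi> \<Longrightarrow> strict_mono \<pi>"
  by (simp add: shifting_def)

lemma shifting_id: "shifting id"
  by (simp add: shifting_def strict_mono_def)

lemma shifting_affine:
  assumes "0 < (m::rat)"
  shows "shifting (\<lambda>x. a + x * m)"
  unfolding shifting_def
proof
  show "strict_mono (\<lambda>x. a + x * m)"
    by (rule strict_monoI) (simp add: assms)
  show "bij (\<lambda>x. a + x * m)"
    unfolding bij_def inj_def surj_def
  proof (intro conjI allI impI)
    fix x y assume "a + x * m = a + y * m"
    then show "x = y" using assms by simp
  next
    fix y show "\<exists>x. y = a + x * m"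
      using assms by (intro exI[of _ "(y - a) / m"]) simp
  qed
qed

section \<open>Strictly monotone maps on finite sets\<close>

lemma card_less_image_strict_mono:
  fixes f :: "'a::linorder \<Rightarrow> 'b::linorder"
  assumes "strict_mono f"
  shows "card {y \<in> f ` P. y < f p} = card {x \<in> P. x < p}"
proof -
  have "{y \<in> f ` P. y < f p} = f ` {x \<in> P. x < p}"
    using assms by (auto simp: strict_mono_less)
  then show ?thesis
    using strict_mono_imp_inj_on[OF assms] by (simp add: card_image)
qed

lemma card_less_strict_mono:
  fixes a b :: "'a::linorder"
  assumes "finite Q" "a \<in> Q" "a < b"
  shows "card {y \<in> Q. y < a} < card {y \<in> Q. y < b}"
  by (rule psubset_card_mono) (use assms in auto)

lemma strict_mono_eq_on_finite:
  fixes f g :: "'a::linorder \<Rightarrow> 'b::linorder"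
  assumes f: "strict_mono f" and g: "strict_mono g"
    and P: "finite P" and eq: "f ` P = g ` P" and p: "p \<in> P"
  shows "f p = g p"
proof -
  let ?rank = "\<lambda>y. card {z \<in> f ` P. z < y}"
  have rank: "?rank (f p) = ?rank (g p)"
    using card_less_image_strict_mono[OF f] card_less_image_strict_mono[OF g] eq by metis
  have mem: "f p \<in> f ` P" "g p \<in> f ` P"
    using p eq by auto
  have fin: "finite (f ` P)"
    using P by simp
  show ?thesis
  proof (rule linorder_cases[of "f p" "g p"])
    assume "f p < g p"
    then show ?thesis
      using card_less_strict_mono[OF fin mem(1), of "g p"] rank by linarith
  next
    assume "g p < f p"
    then show ?thesis
      using card_less_strict_mono[OF fin mem(2), of "f p"] rank by linarith
  qed
qed

lemma is_first_unique:
  assumes "is_first A K G" "is_first A' K' G"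
  shows "A' = A \<and> K' = K"
proof -
  have "A \<notin> K" "A' \<notin> K'" and lt: "\<forall>q\<in>prios K. snd A < q" "\<forall>q\<in>prios K'. snd A' < q"
    using assms by (auto simp: is_first_def prio_before_def prios_def)
  moreover have "A' = A"
  proof (rule ccontr)
    assume "A' \<noteq> A"
    then have "A' \<in> K" "A \<in> K'"
      using assms by (auto simp: is_first_def)
    then show False
      using lt by (force simp: prios_def)
  qed
  moreover have "G = insert A K" "G = insert A' K'"
    using assms by (auto simp: is_first_def)
  ultimately show ?thesis
    by auto
qed

lemma is_first_insert_iff: "is_first A K (insert A K) \<longleftrightarrow> (\<forall>q\<in>prios K. snd A < q)"
  by (simp add: is_first_def prio_before_def)

lemma pgoal_is_first: "pgoal G \<Longrightarrow> is_first A K G \<Longrightarrow> pgoal K"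
  by (auto simp: is_first_def intro: pgoal_subset)

definition step_decomp ::
  "('f,'v) step \<Rightarrow> ('f,'v) patom \<Rightarrow> ('f,'v) pgoal \<Rightarrow> (rat \<Rightarrow> rat) \<Rightarrow> bool"
where
  "step_decomp D A K \<pi> \<longleftrightarrow> (case D of (G, c, \<xi>, \<theta>, R) \<Rightarrow>
     is_first A K G \<and> shifting \<pi> \<and> prio_disj K (gshift (gsubst (snd c) (ren \<xi>)) \<pi>) \<and>
     R = gsubst (K \<union> gshift (gsubst (snd c) (ren \<xi>)) \<pi>) \<theta>)"

lemma step_decompD:
  assumes "step_decomp (G, c, \<xi>, \<theta>, R) A K \<pi>"
  shows "is_first A K G" "shifting \<pi>" "prio_disj K (gshift (gsubst (snd c) (ren \<xi>)) \<pi>)"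
    "R = gsubst (K \<union> gshift (gsubst (snd c) (ren \<xi>)) \<pi>) \<theta>"
  using assms by (simp_all add: step_decomp_def)

lemma is_step_pgoals: "is_step (G, c, \<xi>, \<theta>, R) \<Longrightarrow> pgoal G \<and> pgoal (snd c)"
  by (auto simp: is_step_def step_via_def)

lemma is_step_step_decomp:
  assumes step: "is_step (G, c, \<xi>, \<theta>, R)" and first: "is_first A K G"
  shows "\<exists>\<pi>. step_decomp (G, c, \<xi>, \<theta>, R) A K \<pi>"
proof -
  obtain \<pi> A' K' where "is_first A' K' G" "shifting \<pi>"
      "prio_disj K' (gshift (gsubst (snd c) (ren \<xi>)) \<pi>)"
      "R = gsubst (K' \<union> gshift (gsubst (snd c) (ren \<xi>)) \<pi>) \<theta>"
    using step by (auto simp: is_step_def step_via_def)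
  with is_first_unique[OF first] show ?thesis
    unfolding step_decomp_def by auto
qed

lemma is_step_unifier:
  assumes step: "is_step (G, c, \<xi>, \<theta>, R)" and first: "is_first A K G"
  shows "unifier \<theta> (fst A) (asubst (fst c) (ren \<xi>))"
proof -
  obtain A' K' where "is_first A' K' G" "mgu \<theta> (fst A') (asubst (fst c) (ren \<xi>))"
    using step by (auto simp: is_step_def step_via_def)
  with is_first_unique[OF first] show ?thesis
    unfolding mgu_def by auto
qed

lemma step_decomp_unique:
  assumes d: "step_decomp (G, c, \<xi>, \<theta>, R) A K \<pi>" and d': "step_decomp (G, c, \<xi>, \<theta>, R) A' K' \<pi>'"
    and B: "pgoal (snd c)"
  shows "A' = A \<and> K' = K \<and> (\<forall>q\<in>prios (snd c). \<pi>' q = \<pi> q)"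
proof -
  have AK: "A' = A \<and> K' = K"
    using is_first_unique step_decompD(1)[OF d] step_decompD(1)[OF d'] by blast
  have "\<pi> ` prios (snd c) = prios R - prios K"
    using step_decompD(3,4)[OF d] unfolding prio_disj_def by auto
  moreover have "\<pi>' ` prios (snd c) = prios R - prios K"
    using step_decompD(3,4)[OF d'] AK unfolding prio_disj_def by auto
  moreover have "strict_mono \<pi>" "strict_mono \<pi>'"
    using step_decompD(2)[OF d] step_decompD(2)[OF d'] by (auto simp: shifting_strict_mono)
  ultimately have "\<forall>q\<in>prios (snd c). \<pi>' q = \<pi> q"
    using strict_mono_eq_on_finite[OF _ _ finite_prios[OF B]] by metis
  with AK show ?thesis
    by simp
qed

section \<open>Lowerings preserve the relative order of body and context\<close>

lemma lowering_wit_iff: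
  "lowering_wit (G1, c, \<xi>1, \<alpha>1, R1) (G2, c, \<xi>2, \<alpha>2, R2) X lam sig th1 th2 A K \<longleftrightarrow>
     is_step (G1, c, \<xi>1, \<alpha>1, R1) \<and> is_step (G2, c, \<xi>2, \<alpha>2, R2) \<and>
     step_decomp (G1, c, \<xi>1, \<alpha>1, R1) A K th1 \<and>
     shifting sig \<and> prio_disj (gshift (gsubst K lam) sig) X \<and>
     step_decomp (G2, c, \<xi>2, \<alpha>2, R2)
       (asubst (fst A) lam, sig (snd A)) (gshift (gsubst K lam) sig \<union> X) th2"
  unfolding lowering_wit_def step_decomp_def prio_disj_def by (auto simp: Un_ac)

lemma lowering_wit_unique:
  assumes w: "lowering_wit (G1, c, \<xi>1, \<alpha>1, R1) (G2, c, \<xi>2, \<alpha>2, R2) X lam sig th1 th2 A K"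
    and w': "lowering_wit (G1, c, \<xi>1, \<alpha>1, R1) (G2, c, \<xi>2, \<alpha>2, R2) X lam' sig' th1' th2' A' K'"
  shows "A' = A \<and> K' = K \<and> (\<forall>k\<in>prios K. sig' k = sig k) \<and>
    (\<forall>q\<in>prios (snd c). th1' q = th1 q \<and> th2' q = th2 q)"
proof -
  from w have st: "is_step (G1, c, \<xi>1, \<alpha>1, R1)"
    and d1: "step_decomp (G1, c, \<xi>1, \<alpha>1, R1) A K th1"
    and sig: "shifting sig" and X: "prio_disj (gshift (gsubst K lam) sig) X"
    and d2: "step_decomp (G2, c, \<xi>2, \<alpha>2, R2)
       (asubst (fst A) lam, sig (snd A)) (gshift (gsubst K lam) sig \<union> X) th2"
    by (simp_all add: lowering_wit_iff)
  from w' have d1': "step_decomp (G1, c, \<xi>1, \<alpha>1, R1) A' K' th1'"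
    and sig': "shifting sig'" and X': "prio_disj (gshift (gsubst K' lam') sig') X"
    and d2': "step_decomp (G2, c, \<xi>2, \<alpha>2, R2)
       (asubst (fst A') lam', sig' (snd A')) (gshift (gsubst K' lam') sig' \<union> X) th2'"
    by (simp_all add: lowering_wit_iff)
  have G1: "pgoal G1" and B: "pgoal (snd c)"
    using is_step_pgoals[OF st] by simp_all
  have first: "A' = A \<and> K' = K \<and> (\<forall>q\<in>prios (snd c). th1' q = th1 q)"
    using step_decomp_unique[OF d1 d1' B] .
  have second: "gshift (gsubst K' lam') sig' \<union> X = gshift (gsubst K lam) sig \<union> X \<and>
      (\<forall>q\<in>prios (snd c). th2' q = th2 q)"
    using step_decomp_unique[OF d2 d2' B] by simp
  have "sig' ` prios K = prios (gshift (gsubst K' lam') sig' \<union> X) - prios X"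
    using X' first unfolding prio_disj_def by auto
  also have "\<dots> = prios (gshift (gsubst K lam) sig \<union> X) - prios X"
    using second by simp
  also have "\<dots> = sig ` prios K"
    using X unfolding prio_disj_def by auto
  finally have "\<forall>k\<in>prios K. sig' k = sig k"
    using strict_mono_eq_on_finite[OF _ _ finite_prios[OF pgoal_is_first[OF G1 step_decompD(1)[OF d1]]]]
      sig sig' shifting_strict_mono by metis
  with first second show ?thesis
    by blast
qed

lemma congruent_lowering_order:
  assumes cl: "congruent_lowering (G1, c, \<xi>1, \<alpha>1, R1) (G2, c, \<xi>2, \<alpha>2, R2) X"
    and w: "lowering_wit (G1, c, \<xi>1, \<alpha>1, R1) (G2, c, \<xi>2, \<alpha>2, R2) X lam sig th1 th2 A K"
  shows "\<forall>q\<in>prios (snd c). \<forall>k\<in>prios K. th1 q < k \<longleftrightarrow> th2 q < sig k"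
proof -
  obtain lam' sig' th1' th2' A' K' \<rho> where
      w': "lowering_wit (G1, c, \<xi>1, \<alpha>1, R1) (G2, c, \<xi>2, \<alpha>2, R2) X lam' sig' th1' th2' A' K'"
      and \<rho>: "shifting \<rho>" and \<rho>_K: "gshift K' \<rho> = gshift K' sig'"
      and \<rho>_B: "gshift (gshift (snd c) th1') \<rho> = gshift (snd c) th2'"
    using cl unfolding congruent_lowering_def by auto
  note uniq = lowering_wit_unique[OF w w']
  from w have st: "is_step (G1, c, \<xi>1, \<alpha>1, R1)"
    and d1: "step_decomp (G1, c, \<xi>1, \<alpha>1, R1) A K th1"
    by (simp_all add: lowering_wit_iff)
  from w' have d1': "step_decomp (G1, c, \<xi>1, \<alpha>1, R1) A' K' th1'" and sig': "shifting sig'"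
    and d2': "step_decomp (G2, c, \<xi>2, \<alpha>2, R2)
       (asubst (fst A') lam', sig' (snd A')) (gshift (gsubst K' lam') sig' \<union> X) th2'"
    by (simp_all add: lowering_wit_iff)
  have mono: "strict_mono \<rho>" "strict_mono sig'" "strict_mono th1'" "strict_mono th2'"
    using \<rho> sig' step_decompD(2)[OF d1'] step_decompD(2)[OF d2'] by (simp_all add: shifting_strict_mono)
  have finB: "finite (prios (snd c))"
    using is_step_pgoals[OF st] finite_prios by blast
  have finK: "finite (prios K)"
    using finite_prios[OF pgoal_is_first[OF _ step_decompD(1)[OF d1]]] is_step_pgoals[OF st] by blast
  have "\<rho> ` prios K = sig' ` prios K"
    using arg_cong[OF \<rho>_K, of prios] uniq by simp
  then have \<rho>_sig: "\<forall>k\<in>prios K. \<rho> k = sig k"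
    using strict_mono_eq_on_finite[OF mono(1,2) finK] uniq by simp
  have "(\<rho> \<circ> th1') ` prios (snd c) = th2' ` prios (snd c)"
    using arg_cong[OF \<rho>_B, of prios] by (simp add: image_comp)
  moreover have "strict_mono (\<rho> \<circ> th1')"
    using mono by (simp add: strict_mono_def)
  ultimately have \<rho>_th: "\<forall>q\<in>prios (snd c). \<rho> (th1 q) = th2 q"
    using strict_mono_eq_on_finite[OF _ mono(4) finB] uniq by (metis comp_apply)
  show ?thesis
  proof (intro ballI)
    fix q k assume "q \<in> prios (snd c)" "k \<in> prios K"
    moreover have "th1 q < k \<longleftrightarrow> \<rho> (th1 q) < \<rho> k"
      using mono(1) by (simp add: strict_mono_less)
    ultimately show "th1 q < k \<longleftrightarrow> th2 q < sig k"
      using \<rho>_sig \<rho>_th by simp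
  qed
qed

lemma spec_independent_lowering_order:
  assumes "spec_independent S" "(G1, c, \<xi>1, \<alpha>1, R1) \<in> S" "(G2, c, \<xi>2, \<alpha>2, R2) \<in> S"
    and w: "lowering_wit (G1, c, \<xi>1, \<alpha>1, R1) (G2, c, \<xi>2, \<alpha>2, R2) X lam sig th1 th2 A K"
  shows "\<forall>q\<in>prios (snd c). \<forall>k\<in>prios K. th1 q < k \<longleftrightarrow> th2 q < sig k"
  using assms congruent_lowering_order[OF _ w] unfolding spec_independent_def lowering_def by blast

definition scheduled ::
  "('f,'v) step set \<Rightarrow> ('f,'v) clause \<Rightarrow> ('f,'v) patom \<Rightarrow> ('f,'v) pgoal \<Rightarrow> (rat \<Rightarrow> rat) \<Rightarrow> bool"
where
  "scheduled S c A K \<pi> \<longleftrightarrow>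
     (\<exists>\<xi> \<theta> R. (insert A K, c, \<xi>, \<theta>, R) \<in> S \<and> step_decomp (insert A K, c, \<xi>, \<theta>, R) A K \<pi>)"

lemma scheduling_rule_is_step: "spec_indep_scheduling_rule S \<Longrightarrow> D \<in> S \<Longrightarrow> is_step D"
  by (simp add: spec_indep_scheduling_rule_def complete_def)

lemma scheduled_if_is_step:
  assumes S: "spec_indep_scheduling_rule S" and step: "is_step (insert A K, c, \<xi>, \<theta>, R)"
    and first: "\<forall>q\<in>prios K. snd A < q"
  shows "\<exists>\<pi>. scheduled S c A K \<pi>"
proof -
  obtain \<xi>' \<theta>' R' where D: "(insert A K, c, \<xi>', \<theta>', R') \<in> S"
    using S step unfolding spec_indep_scheduling_rule_def complete_def by blast
  moreover have "is_first A K (insert A K)"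
    using first by (simp add: is_first_insert_iff)
  ultimately show ?thesis
    using is_step_step_decomp scheduling_rule_is_step[OF S D] unfolding scheduled_def by blast
qed

lemma is_step_restrict:
  assumes step: "is_step (insert A K, c, \<xi>, \<theta>, R)"
    and d: "step_decomp (insert A K, c, \<xi>, \<theta>, R) A K \<pi>" and K1: "K1 \<subseteq> K"
  shows "is_step (insert A K1, c, \<xi>, \<theta>, gsubst (K1 \<union> gshift (gsubst (snd c) (ren \<xi>)) \<pi>) \<theta>)"
proof -
  obtain A' K' \<pi>' where G: "pgoal (insert A K)" and first': "is_first A' K' (insert A K)"
      and B: "pgoal (snd c)" and \<xi>: "renaming \<xi>"
      and vars: "gvars (insert A K) \<inter>
        (avars (asubst (fst c) (ren \<xi>)) \<union> gvars (gsubst (snd c) (ren \<xi>))) = {}"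
      and \<theta>: "mgu \<theta> (fst A') (asubst (fst c) (ren \<xi>))" "idempotent \<theta>"
        "relevant \<theta> (fst A') (asubst (fst c) (ren \<xi>))"
    using step unfolding is_step_def step_via_def by auto
  have "A' = A"
    using is_first_unique[OF step_decompD(1)[OF d] first'] by simp
  have "step_via (insert A K1) c \<xi> \<theta> \<pi> (gsubst (K1 \<union> gshift (gsubst (snd c) (ren \<xi>)) \<pi>) \<theta>)"
    unfolding step_via_def
  proof (intro exI conjI)
    show "pgoal (insert A K1)"
      using G K1 by (blast intro: pgoal_subset)
    show "is_first A K1 (insert A K1)"
      using step_decompD(1)[OF d] K1 by (auto simp: is_first_insert_iff is_first_def prio_before_def prios_def)
    show "gvars (insert A K1) \<inter>
        (avars (asubst (fst c) (ren \<xi>)) \<union> gvars (gsubst (snd c) (ren \<xi>))) = {}"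
      using vars gvars_mono[of "insert A K1" "insert A K"] K1 by blast
    show "prio_disj K1 (gshift (gsubst (snd c) (ren \<xi>)) \<pi>)"
      using step_decompD(3)[OF d] prios_mono[OF K1] unfolding prio_disj_def by blast
  qed (use B \<xi> \<theta> \<open>A' = A\<close> step_decompD(2)[OF d] in auto)
  then show ?thesis
    unfolding is_step_def by blast
qed

text \<open>The step on A|K is a lowering by K - K1 of the step on A|K1, with identity substitution
  and shifting.\<close>

lemma scheduled_subgoal_order:
  assumes S: "spec_indep_scheduling_rule S"
    and s1: "scheduled S c A K1 \<pi>1" and s: "scheduled S c A K \<pi>" and K1: "K1 \<subseteq> K"
  shows "\<forall>q\<in>prios (snd c). \<forall>k\<in>prios K1. \<pi>1 q < k \<longleftrightarrow> \<pi> q < k"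
proof -
  obtain \<xi>1 \<theta>1 R1 where D1: "(insert A K1, c, \<xi>1, \<theta>1, R1) \<in> S"
    and d1: "step_decomp (insert A K1, c, \<xi>1, \<theta>1, R1) A K1 \<pi>1"
    using s1 unfolding scheduled_def by blast
  obtain \<xi> \<theta> R where D: "(insert A K, c, \<xi>, \<theta>, R) \<in> S"
    and d: "step_decomp (insert A K, c, \<xi>, \<theta>, R) A K \<pi>"
    using s unfolding scheduled_def by blast
  have "pgoal (insert A K)"
    using is_step_pgoals scheduling_rule_is_step[OF S D] by blast
  then have "prio_disj K1 (K - K1)"
    using K1 unfolding pgoal_def prio_disj_def prios_def inj_on_def by blast
  then have "lowering_wit (insert A K1, c, \<xi>1, \<theta>1, R1) (insert A K, c, \<xi>, \<theta>, R) (K - K1)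
      Var id \<pi>1 \<pi> A K1"
    using d1 d K1 scheduling_rule_is_step[OF S D1] scheduling_rule_is_step[OF S D] shifting_id
    by (simp add: lowering_wit_iff Un_absorb1)
  then show ?thesis
    using spec_independent_lowering_order[OF _ D1 D] S by (simp add: spec_indep_scheduling_rule_def)
qed

lemma scheduled_restrict:
  assumes S: "spec_indep_scheduling_rule S" and s: "scheduled S c A K \<pi>" and K1: "K1 \<subseteq> K"
  shows "\<exists>\<pi>1. scheduled S c A K1 \<pi>1 \<and> (\<forall>q\<in>prios (snd c). \<forall>k\<in>prios K1. \<pi>1 q < k \<longleftrightarrow> \<pi> q < k)"
proof -
  obtain \<xi> \<theta> R where D: "(insert A K, c, \<xi>, \<theta>, R) \<in> S"
    and d: "step_decomp (insert A K, c, \<xi>, \<theta>, R) A K \<pi>"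
    using s unfolding scheduled_def by blast
  have "\<forall>q\<in>prios K1. snd A < q"
    using step_decompD(1)[OF d] prios_mono[OF K1] by (auto simp: is_first_insert_iff)
  then obtain \<pi>1 where "scheduled S c A K1 \<pi>1"
    using scheduled_if_is_step[OF S is_step_restrict[OF scheduling_rule_is_step[OF S D] d K1]] by blast
  then show ?thesis
    using scheduled_subgoal_order[OF S _ s K1] by blast
qed

section \<open>Generic goals built from fresh variables\<close>

text \<open>Distinct blocks s of fresh variables fv (s, _) give variable-disjoint generic atoms; block 0
  is reserved for the generic copy of the head h.\<close>

locale fresh_supply =
  fixes h :: "('f,'v) atom" and B :: "('f,'v) pgoal" and fr :: "nat \<Rightarrow> 'v"
  assumes pgoal_B: "pgoal B" and inj_fr: "inj fr"
    and fresh: "range fr \<inter> (avars h \<union> gvars B) = {}"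
begin

definition fv :: "nat \<times> nat \<Rightarrow> 'v" where
  "fv = fr \<circ> prod_encode"

definition generic_atom :: "('f,'v) atom \<Rightarrow> nat \<Rightarrow> ('f,'v) atom" where
  "generic_atom a s = (fst a, map (\<lambda>i. Var (fv (s, i))) [0..<length (snd a)])"

definition inst :: "(nat \<times> nat \<Rightarrow> ('f,'v) trm) \<Rightarrow> ('f,'v) subst" where
  "inst F x = (if x \<in> range fv then F (inv fv x) else Var x)"

definition head_mgu :: "('f,'v) subst" where
  "head_mgu = inst (\<lambda>(s, i). if s = 0 \<and> i < length (snd h) then snd h ! i else Var (fv (s, i)))"

lemma inj_fv: "inj fv"
  unfolding fv_def by (rule inj_compose[OF inj_fr inj_prod_encode])

lemma inst_fv [simp]: "inst F (fv p) = F p"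
  using inj_fv by (simp add: inst_def)

lemma fv_fresh: "fv p \<in> range fr"
  by (simp add: fv_def)

lemma inst_nonfresh: "x \<notin> range fr \<Longrightarrow> inst F x = Var x"
  by (auto simp: inst_def fv_def)

lemma avars_generic_atom: "avars (generic_atom a s) \<subseteq> range fr"
  by (auto simp: avars_def generic_atom_def fv_fresh)

lemma asubst_generic_atom:
  assumes "fst b = fst a" "length (snd b) = length (snd a)"
    and "\<forall>i<length (snd a). \<sigma> (fv (s, i)) = snd b ! i"
  shows "asubst (generic_atom a s) \<sigma> = b"
proof -
  have "map (\<lambda>t. tsubst t \<sigma>) (map (\<lambda>i. Var (fv (s, i))) [0..<length (snd a)]) = snd b"
    by (rule nth_equalityI) (simp_all add: assms)
  then show ?thesis
    using assms(1) by (simp add: asubst_def generic_atom_def prod_eq_iff)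
qed

lemma head_mgu_cases:
  "head_mgu x = Var x \<or> (\<exists>i<length (snd h). x = fv (0, i) \<and> head_mgu x = snd h ! i)"
proof (cases "x \<in> range fv")
  case True
  then obtain s i where "x = fv (s, i)"
    by auto
  then show ?thesis
    by (auto simp: head_mgu_def)
qed (simp add: head_mgu_def inst_def)

lemma tsubst_head_mgu_h:
  assumes "t \<in> set (snd h)"
  shows "tsubst t head_mgu = t"
proof (rule tsubst_id_on, intro ballI)
  fix x assume "x \<in> tvars t"
  then have "x \<notin> range fr"
    using assms fresh by (auto simp: avars_def)
  then show "head_mgu x = Var x"
    by (simp add: head_mgu_def inst_nonfresh)
qed

lemma mgu_head_mgu: "mgu head_mgu (generic_atom h 0) h"
  unfolding mgu_def
proof (intro conjI allI impI)
  have "asubst h head_mgu = h"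
    using tsubst_head_mgu_h by (simp add: asubst_def map_idI)
  moreover have "asubst (generic_atom h 0) head_mgu = h"
    by (rule asubst_generic_atom) (auto simp: head_mgu_def)
  ultimately show "unifier head_mgu (generic_atom h 0) h"
    by (simp add: unifier_def)
next
  fix \<sigma> assume "unifier \<sigma> (generic_atom h 0) h"
  then have "map (\<lambda>i. \<sigma> (fv (0, i))) [0..<length (snd h)] = map (\<lambda>t. tsubst t \<sigma>) (snd h)"
    by (simp add: unifier_def asubst_def generic_atom_def comp_def)
  then have "\<forall>i<length (snd h). \<sigma> (fv (0, i)) = tsubst (snd h ! i) \<sigma>"
    by (metis (no_types, lifting) add_0 diff_zero length_map nth_map nth_upt)
  then have "\<sigma> = subst_comp head_mgu \<sigma>"
  proof (intro ext)
    fix x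
    from head_mgu_cases[of x] show "\<sigma> x = subst_comp head_mgu \<sigma> x"
      using \<open>\<forall>i<length (snd h). \<sigma> (fv (0, i)) = tsubst (snd h ! i) \<sigma>\<close>
      by (auto simp: subst_comp_def)
  qed
  then show "\<exists>\<delta>. \<sigma> = subst_comp head_mgu \<delta>"
    by blast
qed

lemma idempotent_head_mgu: "idempotent head_mgu"
  unfolding idempotent_def subst_comp_def
proof
  fix x
  from head_mgu_cases[of x] show "tsubst (head_mgu x) head_mgu = head_mgu x"
    by (auto simp: tsubst_head_mgu_h)
qed

lemma relevant_head_mgu: "relevant head_mgu (generic_atom h 0) h"
  unfolding relevant_def svars_def sdom_def
proof (intro Un_least subsetI)
  fix x assume "x \<in> {x. head_mgu x \<noteq> Var x}"
  then show "x \<in> avars (generic_atom h 0) \<union> avars h"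
    using head_mgu_cases[of x] by (auto simp: avars_def generic_atom_def)
next
  fix y assume "y \<in> \<Union> (tvars ` head_mgu ` {x. head_mgu x \<noteq> Var x})"
  then show "y \<in> avars (generic_atom h 0) \<union> avars h"
    using head_mgu_cases by (fastforce simp: avars_def)
qed

lemma generic_step_exists:
  assumes K: "finite K" "inj_on snd (insert (generic_atom h 0, p) K)"
    and first: "\<forall>q\<in>prios K. p < q" and vars: "gvars K \<subseteq> range fr"
  shows "\<exists>\<theta> R. is_step (insert (generic_atom h 0, p) K, (h, B), id, \<theta>, R)"
proof -
  have "finite ((\<lambda>(k, q). k - q) ` (prios K \<times> prios B))"
    using K(1) finite_prios[OF pgoal_B] by (simp add: prios_def)
  then obtain t where t: "t \<notin> (\<lambda>(k, q). k - q) ` (prios K \<times> prios B)"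
    using ex_new_if_finite[OF infinite_UNIV_char_0] by blast
  have "shifting (\<lambda>x. t + x * 1)"
    by (rule shifting_affine) simp
  then have "shifting (\<lambda>x. t + x)"
    by simp
  moreover have "prio_disj K (gshift B (\<lambda>x. t + x))"
    using t unfolding prio_disj_def by force
  moreover have "gvars (insert (generic_atom h 0, p) K) \<inter> (avars h \<union> gvars B) = {}"
    using vars avars_generic_atom[of h 0] fresh by auto
  ultimately have "step_via (insert (generic_atom h 0, p) K) (h, B) id head_mgu (\<lambda>x. t + x)
      (gsubst (K \<union> gshift B (\<lambda>x. t + x)) head_mgu)"
    unfolding step_via_def using K first pgoal_B
    by (intro exI[of _ "(generic_atom h 0, p)"] exI[of _ K])
      (simp add: pgoal_def is_first_insert_iff renaming_def mgu_head_mgu idempotent_head_mgu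
        relevant_head_mgu)
  then show ?thesis
    unfolding is_step_def by blast
qed

end

section \<open>Splitting the body\<close>

text \<open>T is the set of priorities of the stack part M_s of the body of h <- B.\<close>

definition stack_prios :: "('f,'v) step set \<Rightarrow> ('f,'v) atom \<Rightarrow> ('f,'v) pgoal \<Rightarrow> rat set \<Rightarrow> bool"
where
  "stack_prios S h B T \<longleftrightarrow> (\<forall>q\<in>T. \<forall>q'\<in>prios B. q' < q \<longrightarrow> q' \<in> T) \<and>
     (\<forall>A K \<pi>. scheduled S (h, B) A K \<pi> \<longrightarrow> (\<forall>q\<in>prios B. \<forall>k\<in>prios K. \<pi> q < k \<longleftrightarrow> q \<in> T))"

lemma prio_before_stack_queue:
  assumes down: "\<forall>q\<in>T. \<forall>q'\<in>prios B. q' < q \<longrightarrow> q' \<in> T"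
  shows "prio_before {b \<in> B. snd b \<in> T} {b \<in> B. snd b \<notin> T}"
  unfolding prio_before_def
proof (intro ballI)
  fix q q' assume "q \<in> prios {b \<in> B. snd b \<in> T}" and "q' \<in> prios {b \<in> B. snd b \<notin> T}"
  then have "q \<in> T" "q' \<in> prios B" "q' \<notin> T"
    by (auto simp: prios_def)
  then show "q < q'"
    using down by (metis linorder_neqE)
qed

lemma step_decomp_stack_queue:
  assumes d: "step_decomp (G, (h, B), \<xi>, \<mu>, R) A K \<pi>"
    and order: "\<forall>q\<in>prios B. \<forall>k\<in>prios K. \<pi> q < k \<longleftrightarrow> q \<in> T"
    and down: "\<forall>q\<in>T. \<forall>q'\<in>prios B. q' < q \<longrightarrow> q' \<in> T"
  defines "Ms \<equiv> {b \<in> B. snd b \<in> T}" and "Mq \<equiv> {b \<in> B. snd b \<notin> T}"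
  shows "prio_before (gshift (gsubst Ms (ren \<xi>)) \<pi>) K"
    and "prio_before (gshift (gsubst Ms (ren \<xi>)) \<pi> \<union> K) (gshift (gsubst Mq (ren \<xi>)) \<pi>)"
    and "R = gsubst (gshift (gsubst Ms (ren \<xi>)) \<pi> \<union> K \<union> gshift (gsubst Mq (ren \<xi>)) \<pi>) \<mu>"
proof -
  have prios_Ms: "prios Ms \<subseteq> prios B \<inter> T" and prios_Mq: "prios Mq \<subseteq> prios B - T"
    unfolding Ms_def Mq_def prios_def by auto
  have mono: "strict_mono \<pi>"
    using step_decompD(2)[OF d] by (rule shifting_strict_mono)
  show "prio_before (gshift (gsubst Ms (ren \<xi>)) \<pi>) K"
    unfolding prio_before_def using order prios_Ms by auto
  show "prio_before (gshift (gsubst Ms (ren \<xi>)) \<pi> \<union> K) (gshift (gsubst Mq (ren \<xi>)) \<pi>)"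
    unfolding prio_before_def
  proof (intro ballI)
    fix p p' assume p: "p \<in> prios (gshift (gsubst Ms (ren \<xi>)) \<pi> \<union> K)"
      and "p' \<in> prios (gshift (gsubst Mq (ren \<xi>)) \<pi>)"
    then obtain q' where q': "q' \<in> prios Mq" "p' = \<pi> q'"
      by auto
    from p consider (stack) q where "q \<in> prios Ms" "p = \<pi> q" | (rest) "p \<in> prios K"
      by auto
    then show "p < p'"
    proof cases
      case stack
      then show ?thesis
        using prio_before_stack_queue[OF down] q' mono
        unfolding prio_before_def Ms_def Mq_def by (simp add: strict_mono_less)
    next
      case rest
      have "q' \<in> prios B" "q' \<notin> T"
        using q' prios_Mq by auto
      then have "\<not> \<pi> q' < p"
        using order rest by auto
      moreover have "\<pi> q' \<noteq> p"
        using step_decompD(3)[OF d] rest \<open>q' \<in> prios B\<close> unfolding prio_disj_def by auto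
      ultimately show ?thesis
        using q' by simp
    qed
  qed
  have "B = Ms \<union> Mq"
    unfolding Ms_def Mq_def by auto
  then show "R = gsubst (gshift (gsubst Ms (ren \<xi>)) \<pi> \<union> K \<union> gshift (gsubst Mq (ren \<xi>)) \<pi>) \<mu>"
    using step_decompD(4)[OF d] by (simp add: gsubst_Un gshift_Un Un_ac)
qed

lemma stack_queue_typeI:
  fixes S :: "('f,'v) step set"
  assumes steps: "\<forall>D\<in>S. is_step D"
    and split: "\<And>h B. pgoal B \<Longrightarrow> \<exists>T. stack_prios S h B T"
  shows "stack_queue_type S"
  unfolding stack_queue_type_def
proof (intro allI impI)
  fix h :: "('f,'v) atom" and B :: "('f,'v) pgoal"
  assume B: "pgoal B"
  obtain T where "stack_prios S h B T"
    using split[OF B] ..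
  then have down: "\<forall>q\<in>T. \<forall>q'\<in>prios B. q' < q \<longrightarrow> q' \<in> T"
    and order: "\<And>A K \<pi>. scheduled S (h, B) A K \<pi> \<Longrightarrow> \<forall>q\<in>prios B. \<forall>k\<in>prios K. \<pi> q < k \<longleftrightarrow> q \<in> T"
    unfolding stack_prios_def by blast+
  let ?Ms = "{b \<in> B. snd b \<in> T}" and ?Mq = "{b \<in> B. snd b \<notin> T}"
  have "\<exists>\<gamma>. shifting \<gamma> \<and>
      prio_before (gshift (gsubst ?Ms (ren \<xi>)) \<gamma>) K \<and>
      prio_before (gshift (gsubst ?Ms (ren \<xi>)) \<gamma> \<union> K) (gshift (gsubst ?Mq (ren \<xi>)) \<gamma>) \<and>
      R = gsubst (gshift (gsubst ?Ms (ren \<xi>)) \<gamma> \<union> K \<union> gshift (gsubst ?Mq (ren \<xi>)) \<gamma>) \<mu>"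
    if D: "(G, (h, B), \<xi>, \<mu>, R) \<in> S" and first: "is_first A K G" for G \<xi> \<mu> R A K
  proof -
    obtain \<pi> where d: "step_decomp (G, (h, B), \<xi>, \<mu>, R) A K \<pi>"
      using is_step_step_decomp[OF _ first] steps D by blast
    have "G = insert A K"
      using first by (simp add: is_first_def)
    then have "scheduled S (h, B) A K \<pi>"
      using D d unfolding scheduled_def by blast
    then show ?thesis
      using step_decomp_stack_queue[OF d order down] step_decompD(2)[OF d] by blast
  qed
  moreover have "pgoal ?Ms" "pgoal ?Mq"
    by (rule pgoal_subset[OF B], blast)+
  moreover have "B = ?Ms \<union> ?Mq"
    by auto
  moreover have "prio_before ?Ms ?Mq"
    using down by (rule prio_before_stack_queue)
  ultimately show "\<exists>Ms Mq. pgoal Ms \<and> pgoal Mq \<and> B = Ms \<union> Mq \<and> prio_before Ms Mq \<and>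
      (\<forall>G \<xi> \<mu> R A K. (G, (h, B), \<xi>, \<mu>, R) \<in> S \<and> is_first A K G \<longrightarrow>
        (\<exists>\<gamma>. shifting \<gamma> \<and>
           prio_before (gshift (gsubst Ms (ren \<xi>)) \<gamma>) K \<and>
           prio_before (gshift (gsubst Ms (ren \<xi>)) \<gamma> \<union> K) (gshift (gsubst Mq (ren \<xi>)) \<gamma>) \<and>
           R = gsubst (gshift (gsubst Ms (ren \<xi>)) \<gamma> \<union> K \<union> gshift (gsubst Mq (ren \<xi>)) \<gamma>) \<mu>))"
    by blast
qed

section \<open>The body order is the same in all steps of a clause\<close>

locale scheduling_rule_clause = fresh_supply h B fr
  for h :: "('f,'v) atom" and B :: "('f,'v) pgoal" and fr :: "nat \<Rightarrow> 'v" +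
  fixes S :: "('f,'v) step set"
  assumes rule: "spec_indep_scheduling_rule S"
begin

lemma generic_scheduled:
  assumes "finite K" "inj_on snd (insert (generic_atom h 0, 0) K)"
    and "\<forall>q\<in>prios K. 0 < q" "gvars K \<subseteq> range fr"
  shows "\<exists>\<pi>. scheduled S (h, B) (generic_atom h 0, 0) K \<pi>"
proof -
  obtain \<theta> R where "is_step (insert (generic_atom h 0, 0) K, (h, B), id, \<theta>, R)"
    using generic_step_exists[OF assms] by blast
  then show ?thesis
    by (rule scheduled_if_is_step[OF rule]) (use assms(3) in simp)
qed

text \<open>The step on A|a[k] is a lowering of the step on the generic goal: lam instantiates the fresh
  variables, and the affine shifting sig sends 0 to the priority of A and r to k.\<close>

lemma generic_order:
  assumes s: "scheduled S (h, B) A {(a, k)} \<pi>" and j: "0 < j" and r: "0 < r"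
  shows "\<exists>\<pi>0. scheduled S (h, B) (generic_atom h 0, 0) {(generic_atom a j, r)} \<pi>0 \<and>
    (\<forall>q\<in>prios B. \<pi>0 q < r \<longleftrightarrow> \<pi> q < k)"
proof -
  obtain \<xi> \<theta> R where D: "(insert A {(a, k)}, (h, B), \<xi>, \<theta>, R) \<in> S"
    and d: "step_decomp (insert A {(a, k)}, (h, B), \<xi>, \<theta>, R) A {(a, k)} \<pi>"
    using s unfolding scheduled_def by blast
  have "unifier \<theta> (fst A) (asubst h (ren \<xi>))"
    using is_step_unifier[OF scheduling_rule_is_step[OF rule D] step_decompD(1)[OF d]] by simp
  then have shape: "fst (fst A) = fst h" "length (snd (fst A)) = length (snd h)"
    using unifier_same_shape by fastforce+
  have "snd A < k"
    using step_decompD(1)[OF d] by (simp add: is_first_insert_iff)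
  obtain \<pi>0 where s0: "scheduled S (h, B) (generic_atom h 0, 0) {(generic_atom a j, r)} \<pi>0"
    using generic_scheduled[of "{(generic_atom a j, r)}"] r avars_generic_atom[of a j] by auto
  then obtain \<xi>0 \<theta>0 R0 where
    D0: "(insert (generic_atom h 0, 0) {(generic_atom a j, r)}, (h, B), \<xi>0, \<theta>0, R0) \<in> S"
    and d0: "step_decomp (insert (generic_atom h 0, 0) {(generic_atom a j, r)}, (h, B), \<xi>0, \<theta>0, R0)
      (generic_atom h 0, 0) {(generic_atom a j, r)} \<pi>0"
    unfolding scheduled_def by blast
  define lam where "lam = inst (\<lambda>(s, i). if s = 0 \<and> i < length (snd h) then snd (fst A) ! i
      else if s = j \<and> i < length (snd a) then snd a ! i else Var (fv (s, i)))"
  have "asubst (generic_atom h 0) lam = fst A"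
    by (rule asubst_generic_atom) (simp_all add: shape lam_def)
  moreover have "asubst (generic_atom a j) lam = a"
    by (rule asubst_generic_atom) (use j in \<open>simp_all add: lam_def\<close>)
  moreover define sig where "sig = (\<lambda>x. snd A + x * ((k - snd A) / r))"
  moreover have "shifting sig"
    unfolding sig_def by (rule shifting_affine) (use \<open>snd A < k\<close> r in simp)
  moreover have "sig 0 = snd A" "sig r = k"
    using r by (simp_all add: sig_def)
  ultimately have "lowering_wit
      (insert (generic_atom h 0, 0) {(generic_atom a j, r)}, (h, B), \<xi>0, \<theta>0, R0)
      (insert A {(a, k)}, (h, B), \<xi>, \<theta>, R) {} lam sig \<pi>0 \<pi>
      (generic_atom h 0, 0) {(generic_atom a j, r)}"
    using d0 d scheduling_rule_is_step[OF rule D0] scheduling_rule_is_step[OF rule D]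
    by (simp add: lowering_wit_iff prio_disj_def)
  then have "\<forall>q\<in>prios B. \<pi>0 q < r \<longleftrightarrow> \<pi> q < sig r"
    using spec_independent_lowering_order[OF _ D0 D] rule by (simp add: spec_indep_scheduling_rule_def)
  then show ?thesis
    using s0 \<open>sig r = k\<close> by auto
qed

text \<open>Both steps are compared with the step on the generic goal whose context has two atoms, at
  priorities 1 and 2.\<close>

lemma scheduled_order_consistent:
  assumes s: "scheduled S (h, B) A K \<pi>" and k: "(a, k) \<in> K"
    and s': "scheduled S (h, B) A' K' \<pi>'" and k': "(a', k') \<in> K'"
    and q: "q \<in> prios B" and less: "\<pi> q < k"
  shows "\<pi>' q < k'"
proof -
  obtain \<pi>1 where s1: "scheduled S (h, B) A {(a, k)} \<pi>1" and "\<pi>1 q < k \<longleftrightarrow> \<pi> q < k"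
    using scheduled_restrict[OF rule s, of "{(a, k)}"] k q by auto
  moreover obtain \<pi>0 where s0: "scheduled S (h, B) (generic_atom h 0, 0) {(generic_atom a 1, 1)} \<pi>0"
    and "\<pi>0 q < 1 \<longleftrightarrow> \<pi>1 q < k"
    using generic_order[OF s1, of 1 1] q by auto
  moreover obtain \<pi>1' where s1': "scheduled S (h, B) A' {(a', k')} \<pi>1'" and "\<pi>1' q < k' \<longleftrightarrow> \<pi>' q < k'"
    using scheduled_restrict[OF rule s', of "{(a', k')}"] k' q by auto
  moreover obtain \<pi>0' where s0': "scheduled S (h, B) (generic_atom h 0, 0) {(generic_atom a' 2, 2)} \<pi>0'"
    and "\<pi>0' q < 2 \<longleftrightarrow> \<pi>1' q < k'"
    using generic_order[OF s1', of 2 2] q by auto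
  moreover obtain \<pi>C where
    sC: "scheduled S (h, B) (generic_atom h 0, 0) {(generic_atom a 1, 1), (generic_atom a' 2, 2)} \<pi>C"
    using generic_scheduled[of "{(generic_atom a 1, 1), (generic_atom a' 2, 2)}"]
      avars_generic_atom[of a 1] avars_generic_atom[of a' 2] by auto
  moreover have "\<pi>0 q < 1 \<longleftrightarrow> \<pi>C q < 1"
    using scheduled_subgoal_order[OF rule s0 sC] q by auto
  moreover have "\<pi>0' q < 2 \<longleftrightarrow> \<pi>C q < 2"
    using scheduled_subgoal_order[OF rule s0' sC] q by auto
  ultimately show ?thesis
    using less by auto
qed

lemma stack_prios_exists: "\<exists>T. stack_prios S h B T"
proof (cases "\<exists>A K \<pi> k. scheduled S (h, B) A K \<pi> \<and> k \<in> prios K")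
  case True
  then obtain A K \<pi> a k where s: "scheduled S (h, B) A K \<pi>" and k: "(a, k) \<in> K"
    by (auto simp: prios_def)
  define T where "T = {q \<in> prios B. \<pi> q < k}"
  have "strict_mono \<pi>"
    using s shifting_strict_mono step_decompD(2) unfolding scheduled_def by blast
  then have "\<forall>q\<in>T. \<forall>q'\<in>prios B. q' < q \<longrightarrow> q' \<in> T"
    unfolding T_def by (auto dest: strict_monoD)
  moreover have "\<forall>q\<in>prios B. \<forall>k'\<in>prios K'. \<pi>' q < k' \<longleftrightarrow> q \<in> T"
    if s': "scheduled S (h, B) A' K' \<pi>'" for A' K' \<pi>'
  proof (intro ballI)
    fix q k' assume q: "q \<in> prios B" and "k' \<in> prios K'"
    then obtain a' where k': "(a', k') \<in> K'"
      by (auto simp: prios_def)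
    show "\<pi>' q < k' \<longleftrightarrow> q \<in> T"
      using scheduled_order_consistent[OF s k s' k' q] scheduled_order_consistent[OF s' k' s k q] q
      unfolding T_def by blast
  qed
  ultimately have "stack_prios S h B T"
    unfolding stack_prios_def by blast
  then show ?thesis ..
next
  case False
  then have "stack_prios S h B (prios B)"
    unfolding stack_prios_def by blast
  then show ?thesis ..
qed

end

theorem theoremt4p1p1:
  fixes S :: "('f,'v) step set"
  assumes "infinite (UNIV :: 'v set)"
    and "spec_indep_scheduling_rule S"
  shows "stack_queue_type S"
proof (rule stack_queue_typeI)
  show "\<forall>D\<in>S. is_step D"
    using assms(2) scheduling_rule_is_step by blast
next
  fix h :: "('f,'v) atom" and B :: "('f,'v) pgoal"
  assume B: "pgoal B"
  then have "finite (avars h \<union> gvars B)"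
    by (simp add: pgoal_def finite_avars finite_gvars)
  then have "infinite (UNIV - (avars h \<union> gvars B))"
    using assms(1) by (rule Diff_infinite_finite)
  then obtain fr :: "nat \<Rightarrow> 'v" where "inj fr" "range fr \<subseteq> UNIV - (avars h \<union> gvars B)"
    using infinite_countable_subset by blast
  then interpret scheduling_rule_clause h B fr S
    using B assms(2) by unfold_locales auto
  show "\<exists>T. stack_prios S h B T"
    by (rule stack_prios_exists)
qed

end
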